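(* Assume $f$ satisfies (H1)(ii): $|f(t,u(t))-f(t,v(t))|\le(\varphi(t)-\varphi(a))^{1-\sigma}|u(t)-v(t)|$ for $t\in J$, $u,v\in\mathcal{PC}_{1-\sigma;\varphi}(J,\mathbb{R})$, and each $\mathcal{J}_k$ satisfies (H2)(i): $|\mathcal{J}_k(u(t_k^-))-\mathcal{J}_k(v(t_k^-))|\le(\varphi(t_k^-)-\varphi(a))^{1-\sigma}|u(t_k^-)-v(t_k^-)|$. Let $\tilde f:(a,T]\times\mathbb{R}\to\mathbb{R}$, $\tilde{\mathcal{J}}_k:\mathbb{R}\to\mathbb{R}$ and $v_a\in\mathbb{R}$, and suppose there are constants $\delta_a,\varepsilon_f,\varepsilon_{\mathcal{J}}>0$ with $|u_a-v_a|\le\delta_a$, $|f(t,w)-\tilde f(t,w)|\le\varepsilon_f$ for all $t\in(a,T]$, $w\in\mathbb{R}$, and $|\mathcal{J}_k(w)-\tilde{\mathcal{J}}_k(w)|\le\varepsilon_{\mathcal{J}}$ for all $w\in\mathbb{R}$, $k=1,\dots,m$. Let $u\in\mathcal{PC}_{1-\sigma;\varphi}(J,\mathbb{R})$ be a solution of (P) (with data $f,\mathcal{J}_k,u_a$) and $v\in\mathcal{PC}_{1-\sigma;\varphi}(J,\mathbb{R})$ be a solution of (P) with data $\tilde f,\tilde{\mathcal{J}}_k,v_a$. Then $$\|u-v\|_{\mathcal{PC}_{1-\sigma;\varphi}}\le\Big(\frac{\delta_a}{\Gamma(\sigma)}+\frac{m\,\varepsilon_{\mathcal{J}}}{\Ga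mma(\sigma)}+\frac{(\varphi(T)-\varphi(a))^{1-\sigma+\varrho}}{\Gamma(\varrho+1)}\varepsilon_f\Big)\mathcal{A}_{m,\varrho}.$$
   Context: Setting: $a<T$, $m\ge 1$, $a=t_0<t_1<\dots<t_m<t_{m+1}=T$, $J=[a,T]\setminus\{t_1,\dots,t_m\}$. $\varphi\in C^1([a,T],\mathbb{R})$ increasing with $\varphi'\neq0$. $0<\varrho<1$, $0\le\nu\le1$, $\sigma=\varrho+\nu-\varrho\nu$. $\mathbf{I}^{\alpha;\varphi}_{a^+}g(t)=\frac{1}{\Gamma(\alpha)}\int_a^t\varphi'(s)(\varphi(t)-\varphi(s))^{\alpha-1}g(s)\,ds$ ($\alpha>0$); $^H\mathbf{D}^{\varrho,\nu;\varphi}_{a^+}g=\mathbf{I}^{\nu(1-\varrho);\varphi}_{a^+}\big(\tfrac{1}{\varphi'(t)}\tfrac{d}{dt}\big)\mathbf{I}^{(1-\nu)(1-\varrho);\varphi}_{a^+}g$. $E_\varrho(z)=\sum_{j\ge0}z^j/\Gamma(\varrho j+1)$. $\mathcal{PC}_{1-\sigma;\varphi}(J,\mathbb{R})$: all $u:(a,T]\to\mathbb{R}$ such that $(\varphi(t)-\varphi(a))^{1-\sigma}u(t)$ is continuous on each $(t_k,t_{k+1}]$, and $\mathbf{I}^{1-\sigma;\varphi}_{a^+}u(t_k^\pm)$ exist with $\mathbf{I}^{1-\sigma;\varphi}_{a^+}u(t_k^-)=\mathbf{I}^{1-\sigma;\varphi}_{a^+}u(t_k)$; norm $\|u\|_{\mathcal{PC}_{1-\sigma;\varphi}}=\sup_{t\in(a,T]}|(\varphi(t)-\varphi(a))^{1-\sigma}u(t)|$.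 Problem (P) with data $f:(a,T]\times\mathbb{R}\to\mathbb{R}$, $\mathcal{J}_k:\mathbb{R}\to\mathbb{R}$, $u_a\in\mathbb{R}$: $^H\mathbf{D}^{\varrho,\nu;\varphi}_{a^+}u(t)=f(t,u(t))$ on $J$; $\mathbf{I}^{1-\sigma;\varphi}_{a^+}u(t_k^+)-\mathbf{I}^{1-\sigma;\varphi}_{a^+}u(t_k^-)=\mathcal{J}_k(u(t_k^-))$; $\mathbf{I}^{1-\sigma;\varphi}_{a^+}u(a)=u_a$. A solution of (P) is $u\in\mathcal{PC}_{1-\sigma;\varphi}(J,\mathbb{R})$ with $u(t)=\frac{(\varphi(t)-\varphi(a))^{\sigma-1}}{\Gamma(\sigma)}\big(u_a+\sum_{a<t_k<t}\mathcal{J}_k(u(t_k^-))\big)+\mathbf{I}^{\varrho;\varphi}_{a^+}[f(\cdot,u(\cdot))](t)$ for all $t\in(a,T]$. Constant: $\mathcal{A}_{m,\varrho}=\Big(1+\frac{1}{\Gamma(\sigma)}E_\varrho\big((\varphi(T)-\varphi(a))^{1-\sigma+\varrho}\big)\Big)^m E_\varrho\big((\varphi(T)-\varphi(a))^{1-\sigma+\varrho}\big)$. *)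

theory Defs
  imports "HOL-Analysis.Analysis"
begin

text \<open>phi-Riemann-Liouville fractional integral of order alpha (alpha > 0);
  order 0 is the identity by the usual convention.  The derivative phi' of phi
  is passed explicitly.\<close>
definition frac_int ::
  "(real \<Rightarrow> real) \<Rightarrow> (real \<Rightarrow> real) \<Rightarrow> real \<Rightarrow> real \<Rightarrow> (real \<Rightarrow> real) \<Rightarrow> real \<Rightarrow> real" where
  "frac_int \<phi> \<phi>' a \<alpha> g t =
     (if \<alpha> = 0 then g t
      else (1 / Gamma \<alpha>) * integral {a..t} (\<lambda>s. \<phi>' s * (\<phi> t - \<phi> s) powr (\<alpha> - 1) * g s))"

definition mittag_leffler :: "real \<Rightarrow> real \<Rightarrow> real" where
  "mittag_leffler \<rho> z = (\<Sum>j. z ^ j / Gamma (\<rho> * real j + 1))"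

text \<open>The space PC_{1-sigma;phi}(J,R); partition points t 0 = a < t 1 < ... < t (m+1) = T.
  Boundedness of the weighted function (finiteness of the norm) is included.\<close>
definition PC_space ::
  "(real \<Rightarrow> real) \<Rightarrow> (real \<Rightarrow> real) \<Rightarrow> real \<Rightarrow> real \<Rightarrow> (nat \<Rightarrow> real) \<Rightarrow> nat \<Rightarrow> real
   \<Rightarrow> (real \<Rightarrow> real) set" where
  "PC_space \<phi> \<phi>' a T t m \<sigma> =
    {u. (\<forall>k\<le>m. continuous_on {t k<..t (Suc k)} (\<lambda>s. (\<phi> s - \<phi> a) powr (1 - \<sigma>) * u s))
      \<and> bounded ((\<lambda>s. (\<phi> s - \<phi> a) powr (1 - \<sigma>) * u s) ` {a<..T})
      \<and> (\<forall>k\<in>{1..m}.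
           ((frac_int \<phi> \<phi>' a (1 - \<sigma>) u \<longlongrightarrow> frac_int \<phi> \<phi>' a (1 - \<sigma>) u (t k)) (at_left (t k)))
         \<and> (\<exists>L. (frac_int \<phi> \<phi>' a (1 - \<sigma>) u \<longlongrightarrow> L) (at_right (t k))))}"

definition PC_norm :: "(real \<Rightarrow> real) \<Rightarrow> real \<Rightarrow> real \<Rightarrow> real \<Rightarrow> (real \<Rightarrow> real) \<Rightarrow> real" where
  "PC_norm \<phi> a T \<sigma> u = (SUP s\<in>{a<..T}. \<bar>(\<phi> s - \<phi> a) powr (1 - \<sigma>) * u s\<bar>)"

text \<open>Solution of problem (P) with data f, Jk, ua (given as the integral equation);
  the fractional integral of f(.,u(.)) is required to exist.\<close>
definition is_solution ::
  "(real \<Rightarrow> real) \<Rightarrow> (real \<Rightarrow> real) \<Rightarrow> real \<Rightarrow> real \<Rightarrow> (nat \<Rightarrow> real) \<Rightarrow> nat \<Rightarrow> real \<Rightarrow> real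
   \<Rightarrow> (real \<Rightarrow> real \<Rightarrow> real) \<Rightarrow> (nat \<Rightarrow> real \<Rightarrow> real) \<Rightarrow> real \<Rightarrow> (real \<Rightarrow> real) \<Rightarrow> bool" where
  "is_solution \<phi> \<phi>' a T t m \<sigma> \<rho> f Jk ua u \<longleftrightarrow>
     u \<in> PC_space \<phi> \<phi>' a T t m \<sigma>
   \<and> (\<forall>s\<in>{a<..T}. (\<lambda>r. \<phi>' r * (\<phi> s - \<phi> r) powr (\<rho> - 1) * f r (u r)) integrable_on {a..s})
   \<and> (\<forall>s\<in>{a<..T}. u s =
        (\<phi> s - \<phi> a) powr (\<sigma> - 1) / Gamma \<sigma>
          * (ua + (\<Sum>k\<in>{k\<in>{1..m}. t k < s}. Jk k (Lim (at_left (t k)) u)))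
        + frac_int \<phi> \<phi>' a \<rho> (\<lambda>r. f r (u r)) s)"

end

theory Submission
  imports Defs
begin

text \<open>
  Put y(s) = (\<phi> s - \<phi> a) powr (1 - \<sigma>) * \<bar>u s - v s\<bar>.  Subtracting the two integral
  equations and using (H1), (H2), whose Lipschitz constants are exactly this weight, gives
    y(s) \<le> B + (\<Sum>[t_k < s] y(t_k) + \<epsilon>J) / \<Gamma>(\<sigma>) + G / \<Gamma>(\<rho>) \<integral>[a..s] \<phi>'(r) (\<phi> s - \<phi> r)^(\<rho>-1) y(r) dr
  with B = \<delta>a / \<Gamma>(\<sigma>) + (\<phi> T - \<phi> a)^(1-\<sigma>+\<rho>) \<epsilon>f / \<Gamma>(\<rho>+1) and G = (\<phi> T - \<phi> a)^(1-\<sigma>).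
  Between two impulses this is a fractional Gronwall inequality: when it is iterated, the
  kernel maps the j-th Mittag-Leffler term to the (j+1)-th (a Beta integral after the
  substitution x = \<phi> r), so y \<le> A E_\<rho>(G (\<phi> T - \<phi> a)^\<rho>).  Crossing the impulse points one
  at a time, each jump adds at most (D_(i-1) E + \<epsilon>J) / \<Gamma>(\<sigma>), and the resulting recursion
  D_i = D_(i-1) (1 + E / \<Gamma>(\<sigma>)) + \<epsilon>J / \<Gamma>(\<sigma>) is bounded by (B + i \<epsilon>J / \<Gamma>(\<sigma>)) (1 + E / \<Gamma>(\<sigma>))^i,
  which is the constant of the theorem.
\<close>

lemma hilfer_type_bounds:
  fixes \<rho> \<nu> :: real
  assumes "0 < \<rho>" "\<rho> < 1" "0 \<le> \<nu>" "\<nu> \<le> 1"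
  shows "0 < \<rho> + \<nu> - \<rho> * \<nu>" "\<rho> + \<nu> - \<rho> * \<nu> \<le> 1"
proof -
  have "0 \<le> \<nu> * (1 - \<rho>)" "0 \<le> (1 - \<rho>) * (1 - \<nu>)"
    using assms by simp_all
  then show "0 < \<rho> + \<nu> - \<rho> * \<nu>" "\<rho> + \<nu> - \<rho> * \<nu> \<le> 1"
    using assms by (simp_all add: algebra_simps)
qed

lemma has_integral_Beta_interval:
  fixes p q \<alpha> \<beta> :: real
  assumes pq: "p < q" and \<alpha>: "\<alpha> > 0" and \<beta>: "\<beta> > 0"
  shows "((\<lambda>x. (x - p) powr (\<alpha> - 1) * (q - x) powr (\<beta> - 1)) has_integral
           (q - p) powr (\<alpha> + \<beta> - 1) * Beta \<alpha> \<beta>) {p..q}"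
proof -
  define L where "L = q - p"
  have L: "L > 0" using pq by (simp add: L_def)
  define h where "h = (\<lambda>x::real. x powr (\<alpha> - 1) * (1 - x) powr (\<beta> - 1))"
  have "(h has_integral Beta \<alpha> \<beta>) (cbox 0 1)"
    using has_integral_Beta_real[OF \<alpha> \<beta>] by (simp add: h_def)
  from has_integral_affinity[OF this, of "1/L" "-p/L"] L
  have "((\<lambda>x. h (x / L + - p / L)) has_integral L * Beta \<alpha> \<beta>) ((\<lambda>x. L * x + p) ` cbox 0 1)"
    by simp
  moreover have "(\<lambda>x. L * x + p) ` cbox 0 1 = {p..q}"
    using L image_affinity_atLeastAtMost[of L p 0 1] by (simp add: L_def)
  ultimately have int: "((\<lambda>x. L powr (\<alpha> + \<beta> - 2) * h (x / L + - p / L)) has_integral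
                      L powr (\<alpha> + \<beta> - 2) * (L * Beta \<alpha> \<beta>)) {p..q}"
    by (simp add: has_integral_mult_right)
  have val: "L powr (\<alpha> + \<beta> - 2) * (L * Beta \<alpha> \<beta>) = L powr (\<alpha> + \<beta> - 1) * Beta \<alpha> \<beta>"
    using L by (simp add: powr_diff field_simps power2_eq_square)
  have "L powr (\<alpha> + \<beta> - 2) * h (x / L + - p / L) = (x - p) powr (\<alpha> - 1) * (q - x) powr (\<beta> - 1)"
    if "x \<in> {p..q}" for x
  proof -
    have "x / L + - p / L = (x - p) / L" by (simp add: diff_divide_distrib)
    moreover have "1 - (x - p) / L = (q - x) / L" using L by (simp add: L_def field_simps)
    moreover have "L powr (\<alpha> + \<beta> - 2) = L powr (\<alpha> - 1) * L powr (\<beta> - 1)"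
      by (simp add: powr_add[symmetric])
    ultimately show ?thesis
      using that L by (simp add: h_def powr_divide)
  qed
  from has_integral_eq[OF this int[unfolded val]] show ?thesis
    unfolding L_def .
qed

lemma Gamma_affine_pos: "0 \<le> \<rho> \<Longrightarrow> 0 < Gamma (\<rho> * real j + 1)"
  by (intro Gamma_real_pos) (simp add: add_nonneg_pos)

lemma Gamma_real_plus1: "0 < x \<Longrightarrow> Gamma (x + 1) = x * Gamma (x :: real)"
  using nonpos_Ints_nonpos[of x] by (intro Gamma_plus1) force

lemma Gamma_real_mono: "3/2 \<le> x \<Longrightarrow> x \<le> y \<Longrightarrow> Gamma (x::real) \<le> Gamma y"
  using Gamma_real_strict_mono[of x y] by (cases "x = y") auto

definition mittag_leffler_term :: "real \<Rightarrow> real \<Rightarrow> nat \<Rightarrow> real" where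
  "mittag_leffler_term \<rho> z j = z ^ j / Gamma (\<rho> * real j + 1)"

lemma mittag_leffler_eq_suminf: "mittag_leffler \<rho> z = (\<Sum>j. mittag_leffler_term \<rho> z j)"
  by (simp add: mittag_leffler_def mittag_leffler_term_def)

lemma mittag_leffler_term_0 [simp]: "mittag_leffler_term \<rho> z 0 = 1"
  by (simp add: mittag_leffler_term_def)

lemma mittag_leffler_term_nonneg: "0 \<le> \<rho> \<Longrightarrow> 0 \<le> z \<Longrightarrow> 0 \<le> mittag_leffler_term \<rho> z j"
  using Gamma_affine_pos[of \<rho> j] by (simp add: mittag_leffler_term_def)

lemma mittag_leffler_term_mono:
  "0 \<le> \<rho> \<Longrightarrow> 0 \<le> z \<Longrightarrow> z \<le> w \<Longrightarrow> mittag_leffler_term \<rho> z j \<le> mittag_leffler_term \<rho> w j"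
  using Gamma_affine_pos[of \<rho> j]
  by (simp add: mittag_leffler_term_def divide_right_mono power_mono)

lemma mittag_leffler_term_le_fact:
  assumes \<rho>: "0 < \<rho>" and z: "0 \<le> z" "z \<le> W powr \<rho>" and W: "1 \<le> W"
    and j: "1 \<le> \<rho> * real j"
  shows "mittag_leffler_term \<rho> z j \<le> W ^ (nat \<lfloor>\<rho> * real j\<rfloor> + 1) / fact (nat \<lfloor>\<rho> * real j\<rfloor>)"
proof -
  define n where "n = nat \<lfloor>\<rho> * real j\<rfloor>"
  have n: "real n \<le> \<rho> * real j" "\<rho> * real j < real n + 1" "1 \<le> n"
    using j unfolding n_def by linarith+
  have "fact n = Gamma (real n + 1)"
    by (simp add: Gamma_fact add.commute)
  also have "\<dots> \<le> Gamma (\<rho> * real j + 1)"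
    using n by (intro Gamma_real_mono) auto
  finally have Gamma_ge: "fact n \<le> Gamma (\<rho> * real j + 1)" .
  have "z ^ j \<le> (W powr \<rho>) ^ j"
    using z by (intro power_mono)
  also have "\<dots> = W powr (\<rho> * real j)"
    using W by (simp add: powr_powr[symmetric] powr_realpow)
  also have "\<dots> \<le> W powr real (n + 1)"
    using n W by (intro powr_mono) auto
  also have "\<dots> = W ^ (n + 1)"
    using W by (subst powr_realpow) auto
  finally have "z ^ j \<le> W ^ (n + 1)" .
  with Gamma_ge z W show ?thesis
    unfolding mittag_leffler_term_def n_def[symmetric]
    by (intro frac_le) auto
qed

text \<open>For large \<open>j\<close> the terms are dominated by \<open>W (2W)\<^sup>n/n! \<cdot> 2\<^sup>-\<^sup>n\<close> with
  \<open>n = \<lfloor>\<rho> j\<rfloor>\<close>, hence by a geometric series in \<open>2\<^sup>-\<^sup>\<rho>\<close>.\<close>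

lemma summable_mittag_leffler_term:
  assumes \<rho>: "0 < \<rho>" and z: "0 \<le> z"
  shows "summable (mittag_leffler_term \<rho> z)"
proof -
  define W where "W = max 1 (z powr (1 / \<rho>))"
  have W: "1 \<le> W" by (simp add: W_def)
  have zW: "z \<le> W powr \<rho>"
  proof (cases "z = 0")
    case False
    then have "z = (z powr (1 / \<rho>)) powr \<rho>"
      using z \<rho> by (simp add: powr_powr)
    also have "\<dots> \<le> W powr \<rho>"
      using \<rho> by (intro powr_mono2) (auto simp: W_def)
    finally show ?thesis .
  qed simp
  have "Bseq (\<lambda>n. inverse (fact n) * (2 * W) ^ n)"
    using summable_exp[of "2 * W"] summable_LIMSEQ_zero convergent_def convergent_imp_Bseq
    by blast
  then obtain C where C: "0 < C" "\<And>n. \<bar>inverse (fact n) * (2 * W) ^ n\<bar> \<le> C"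
    unfolding Bseq_def by auto
  define q where "q = (1 / 2 :: real) powr \<rho>"
  have q: "0 \<le> q" "q < 1"
    using \<rho> by (auto simp: q_def powr_divide)
  show ?thesis
  proof (rule summable_comparison_test'[of "\<lambda>j. 2 * W * C * q ^ j" "nat \<lceil>1 / \<rho>\<rceil>"])
    show "summable (\<lambda>j. 2 * W * C * q ^ j)"
      using q by (intro summable_mult summable_geometric) auto
  next
    fix j assume "nat \<lceil>1 / \<rho>\<rceil> \<le> j"
    then have j: "1 \<le> \<rho> * real j"
      using \<rho> by (simp add: field_simps)
    define n where "n = nat \<lfloor>\<rho> * real j\<rfloor>"
    have n: "\<rho> * real j - 1 \<le> real n"
      unfolding n_def by linarith
    have "(1 / 2 :: real) ^ n \<le> (1 / 2) powr (\<rho> * real j - 1)"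
      using n by (simp add: powr_realpow[symmetric] powr_mono')
    also have "\<dots> = 2 * q ^ j"
      by (simp add: q_def powr_diff powr_powr[symmetric] powr_realpow)
    finally have half: "(1 / 2 :: real) ^ n \<le> 2 * q ^ j" .
    have "norm (mittag_leffler_term \<rho> z j) = mittag_leffler_term \<rho> z j"
      using mittag_leffler_term_nonneg[of \<rho> z j] \<rho> z by simp
    also have "\<dots> \<le> W ^ (n + 1) / fact n"
      unfolding n_def by (rule mittag_leffler_term_le_fact[OF \<rho> z zW W j])
    also have "\<dots> = W * (inverse (fact n) * (2 * W) ^ n) * (1 / 2) ^ n"
      by (simp add: power_mult_distrib field_simps)
    also have "\<dots> \<le> W * C * (2 * q ^ j)"
      using C W half by (intro mult_mono mult_left_mono) auto
    finally show "norm (mittag_leffler_term \<rho> z j) \<le> 2 * W * C * q ^ j"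
      by (simp add: mult_ac)
  qed
qed

lemma mittag_leffler_nonneg: "0 < \<rho> \<Longrightarrow> 0 \<le> z \<Longrightarrow> 0 \<le> mittag_leffler \<rho> z"
  unfolding mittag_leffler_eq_suminf
  by (intro suminf_nonneg summable_mittag_leffler_term mittag_leffler_term_nonneg) auto

lemma mittag_leffler_mono:
  "0 < \<rho> \<Longrightarrow> 0 \<le> z \<Longrightarrow> z \<le> w \<Longrightarrow> mittag_leffler \<rho> z \<le> mittag_leffler \<rho> w"
  unfolding mittag_leffler_eq_suminf
  by (intro suminf_le summable_mittag_leffler_term mittag_leffler_term_mono) auto

lemma integral_le_off_finite:
  fixes f g :: "'a::euclidean_space \<Rightarrow> real"
  assumes "f integrable_on S" "g integrable_on S" "finite N"
    and "\<And>x. x \<in> S - N \<Longrightarrow> f x \<le> g x"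
  shows "integral S f \<le> integral S g"
proof -
  define f' where "f' x = (if x \<in> N then 0 else f x)" for x
  define g' where "g' x = (if x \<in> N then 0 else g x)" for x
  have "(f' has_integral integral S f) S"
    by (rule has_integral_spike_finite[OF \<open>finite N\<close> _ integrable_integral[OF assms(1)]])
       (simp add: f'_def)
  moreover have "(g' has_integral integral S g) S"
    by (rule has_integral_spike_finite[OF \<open>finite N\<close> _ integrable_integral[OF assms(2)]])
       (simp add: g'_def)
  ultimately show ?thesis
    by (rule has_integral_le) (use assms(4) in \<open>auto simp: f'_def g'_def\<close>)
qed

lemma mono_on_has_real_derivative_nonneg:
  fixes \<phi> :: "real \<Rightarrow> real"
  assumes mono: "mono_on {a..b} \<phi>" and x: "a < x" "x < b"
    and der: "(\<phi> has_real_derivative D) (at x)"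
  shows "0 \<le> D"
proof (rule ccontr)
  assume "\<not> 0 \<le> D"
  then obtain d where d: "0 < d" "\<And>h. 0 < h \<Longrightarrow> h < d \<Longrightarrow> \<phi> (x + h) < \<phi> x"
    using DERIV_neg_dec_right[OF der] by (meson not_le)
  obtain h where h: "0 < h" "h < d" "h < b - x"
    using field_lbound_gt_zero[of d "b - x"] d x by auto
  have "\<phi> x \<le> \<phi> (x + h)"
    using x h by (intro mono_onD[OF mono]) auto
  with d(2)[OF h(1,2)] show False by simp
qed

lemma mono_on_deriv_pos:
  fixes \<phi> \<phi>' :: "real \<Rightarrow> real"
  assumes aT: "a < T"
    and der: "\<And>x. x \<in> {a..T} \<Longrightarrow> (\<phi> has_real_derivative \<phi>' x) (at x within {a..T})"
    and cont: "continuous_on {a..T} \<phi>'"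
    and mono: "mono_on {a..T} \<phi>"
    and nonzero: "\<And>x. x \<in> {a..T} \<Longrightarrow> \<phi>' x \<noteq> 0"
    and x: "x \<in> {a..T}"
  shows "0 < \<phi>' x"
proof (rule ccontr)
  assume neg: "\<not> 0 < \<phi>' x"
  define c where "c = (a + T) / 2"
  have c: "a < c" "c < T" using aT by (auto simp: c_def)
  then have "(\<phi> has_real_derivative \<phi>' c) (at c)"
    using der[of c] at_within_Icc_at[of a c T] by auto
  then have "0 < \<phi>' c"
    using mono_on_has_real_derivative_nonneg[OF mono c] nonzero[of c] c by force
  moreover have "connected (\<phi>' ` {a..T})"
    by (rule connected_continuous_image[OF cont]) simp
  moreover have "\<phi>' x \<in> \<phi>' ` {a..T}" "\<phi>' c \<in> \<phi>' ` {a..T}"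
    using x c by auto
  ultimately have "0 \<in> \<phi>' ` {a..T}"
    using neg unfolding connected_iff_interval by (meson less_imp_le not_less)
  with nonzero show False by auto
qed

lemma partition_cover:
  fixes t :: "nat \<Rightarrow> 'a::linorder"
  assumes "t 0 < r" "r \<le> t (Suc n)"
  shows "\<exists>k\<le>n. t k < r \<and> r \<le> t (Suc k)"
  using assms
proof (induction n)
  case (Suc n)
  show ?case
  proof (cases "r \<le> t (Suc n)")
    case True
    with Suc obtain k where "k \<le> n" "t k < r" "r \<le> t (Suc k)" by blast
    then show ?thesis by (intro exI[of _ k]) auto
  next
    case False
    with Suc.prems show ?thesis by (intro exI[of _ "Suc n"]) auto
  qed
qed auto

text \<open>\<open>impulse_seq B E e g i\<close> is the bound D_i on the weighted error over (a, t (i + 1)].\<close>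

fun impulse_seq :: "real \<Rightarrow> real \<Rightarrow> real \<Rightarrow> real \<Rightarrow> nat \<Rightarrow> real" where
  "impulse_seq B E e g 0 = B"
| "impulse_seq B E e g (Suc i) = impulse_seq B E e g i + (impulse_seq B E e g i * E + e) / g"

lemma impulse_seq_eq_sum:
  "impulse_seq B E e g i = B + (\<Sum>k\<in>{1..i}. impulse_seq B E e g (k - 1) * E + e) / g"
proof (induction i)
  case (Suc i)
  have "{1..Suc i} = insert (Suc i) {1..i}" by auto
  with Suc show ?case by (simp add: add_divide_distrib)
qed simp

lemma impulse_seq_nonneg: "0 \<le> B \<Longrightarrow> 0 \<le> E \<Longrightarrow> 0 \<le> e \<Longrightarrow> 0 < g \<Longrightarrow> 0 \<le> impulse_seq B E e g i"
  by (induction i) auto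

lemma impulse_seq_le:
  assumes B: "0 \<le> B" and E: "0 \<le> E" and e: "0 \<le> e" and g: "0 < g"
  shows "impulse_seq B E e g i \<le> (B + real i * (e / g)) * (1 + E / g) ^ i"
proof (induction i)
  case (Suc i)
  define q where "q = 1 + E / g"
  have q: "1 \<le> q" using E g by (simp add: q_def)
  have "impulse_seq B E e g (Suc i) = impulse_seq B E e g i * q + e / g"
    by (simp add: q_def algebra_simps add_divide_distrib)
  also have "\<dots> \<le> (B + real i * (e / g)) * q ^ i * q + e / g * q ^ Suc i"
  proof (intro add_mono mult_right_mono)
    show "impulse_seq B E e g i \<le> (B + real i * (e / g)) * q ^ i"
      using Suc.IH by (simp add: q_def)
    have "0 \<le> e / g" using e g by simp
    then have "e / g * 1 \<le> e / g * q ^ Suc i"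
      by (rule mult_left_mono[OF one_le_power[OF q]])
    then show "e / g \<le> e / g * q ^ Suc i" by simp
  qed (use q in auto)
  also have "\<dots> = (B + real (Suc i) * (e / g)) * q ^ Suc i"
    by (simp add: algebra_simps)
  finally show ?case by (simp add: q_def)
qed simp

locale frac_scale =
  fixes \<phi> \<phi>' :: "real \<Rightarrow> real" and a T :: real
  assumes a_less_T: "a < T"
    and has_deriv: "\<And>x. x \<in> {a..T} \<Longrightarrow> (\<phi> has_real_derivative \<phi>' x) (at x within {a..T})"
    and deriv_continuous: "continuous_on {a..T} \<phi>'"
    and deriv_pos: "\<And>x. x \<in> {a..T} \<Longrightarrow> 0 < \<phi>' x"
begin

abbreviation kernel :: "real \<Rightarrow> real \<Rightarrow> real \<Rightarrow> real" where
  "kernel \<rho> s r \<equiv> \<phi>' r * (\<phi> s - \<phi> r) powr (\<rho> - 1)"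

lemma phi_continuous: "continuous_on {a..T} \<phi>"
  using has_deriv by (intro DERIV_continuous_on) auto

lemma phi_strict_mono: "strict_mono_on {a..T} \<phi>"
proof (rule strict_mono_onI)
  fix r s assume rs: "r \<in> {a..T}" "s \<in> {a..T}" "r < s"
  show "\<phi> r < \<phi> s"
  proof (rule DERIV_pos_imp_increasing_open[OF \<open>r < s\<close>])
    fix x assume "r < x" "x < s"
    with rs have "x \<in> {a<..<T}" by auto
    then show "\<exists>y. (\<phi> has_real_derivative y) (at x) \<and> 0 < y"
      using has_deriv[of x] deriv_pos[of x] at_within_Icc_at[of a x T] by auto
  qed (use rs in \<open>auto intro: continuous_on_subset[OF phi_continuous]\<close>)
qed

lemma phi_mono: "r \<in> {a..T} \<Longrightarrow> s \<in> {a..T} \<Longrightarrow> r \<le> s \<Longrightarrow> \<phi> r \<le> \<phi> s"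
  using phi_strict_mono by (cases "r = s") (auto simp: strict_mono_on_def less_imp_le)

lemma phi_diff_pos: "r \<in> {a<..T} \<Longrightarrow> 0 < \<phi> r - \<phi> a"
  using phi_strict_mono a_less_T by (auto simp: strict_mono_on_def)

lemma kernel_nonneg: "r \<in> {a..T} \<Longrightarrow> 0 \<le> kernel \<rho> s r"
  using deriv_pos[of r] by simp

lemma has_integral_kernel_powr:
  assumes s: "s \<in> {a<..T}" and \<rho>: "0 < \<rho>" and \<beta>: "0 \<le> \<beta>"
  shows "((\<lambda>r. kernel \<rho> s r * (\<phi> r - \<phi> a) powr \<beta>) has_integral
           Beta (\<beta> + 1) \<rho> * (\<phi> s - \<phi> a) powr (\<rho> + \<beta>)) {a..s}"
proof -
  define g where "g = (\<lambda>x. (\<phi> s - x) powr (\<rho> - 1) * (x - \<phi> a) powr \<beta>)"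
  define V where "V = Beta (\<beta> + 1) \<rho> * (\<phi> s - \<phi> a) powr (\<rho> + \<beta>)"
  have sub: "{a..s} \<subseteq> {a..T}" using s by auto
  have sm: "strict_mono_on {a..s} \<phi>"
    using monotone_on_subset[OF phi_strict_mono sub] .
  have der: "(\<phi> has_real_derivative \<phi>' x) (at x within {a..s})" if "x \<in> {a..s}" for x
    using that sub by (intro DERIV_subset[OF has_deriv]) auto
  have img: "\<phi> ` {a..s} = {\<phi> a..\<phi> s}"
  proof
    show "\<phi> ` {a..s} \<subseteq> {\<phi> a..\<phi> s}"
      using s a_less_T by (auto intro!: phi_mono)
    show "{\<phi> a..\<phi> s} \<subseteq> \<phi> ` {a..s}"
    proof
      fix y assume "y \<in> {\<phi> a..\<phi> s}"
      then obtain x where "a \<le> x" "x \<le> s" "\<phi> x = y"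
        using IVT'[of \<phi> a y s] continuous_on_subset[OF phi_continuous sub] s by auto
      then show "y \<in> \<phi> ` {a..s}" by auto
    qed
  qed
  have "((\<lambda>x. (x - \<phi> a) powr (\<beta> + 1 - 1) * (\<phi> s - x) powr (\<rho> - 1)) has_integral
          (\<phi> s - \<phi> a) powr (\<beta> + 1 + \<rho> - 1) * Beta (\<beta> + 1) \<rho>) {\<phi> a..\<phi> s}"
    using phi_diff_pos[OF s] \<rho> \<beta> by (intro has_integral_Beta_interval) auto
  then have gI: "(g has_integral V) {\<phi> a..\<phi> s}"
    by (simp add: g_def V_def mult.commute add.commute)
  have gA: "g absolutely_integrable_on (\<phi> ` {a..s})"
    unfolding img by (rule nonnegative_absolutely_integrable_1) (use gI in \<open>auto simp: g_def\<close>)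
  have "(\<lambda>x. \<bar>\<phi>' x\<bar> * g (\<phi> x)) absolutely_integrable_on {a..s}
           \<and> integral {a..s} (\<lambda>x. \<bar>\<phi>' x\<bar> * g (\<phi> x)) = V"
    by (subst has_absolute_integral_change_of_variables_1'[OF _ der])
       (use gA gI img sm in \<open>auto intro: strict_mono_on_imp_inj_on\<close>)
  then have "((\<lambda>x. \<bar>\<phi>' x\<bar> * g (\<phi> x)) has_integral V) {a..s}"
    using absolutely_integrable_on_def has_integral_integrable_integral by blast
  then have "((\<lambda>x. \<phi>' x * g (\<phi> x)) has_integral V) {a..s}"
    by (rule has_integral_spike_finite[of "{}", rotated 2]) (use sub deriv_pos in \<open>auto simp: less_imp_le\<close>)
  then show ?thesis
    unfolding g_def V_def by (simp only: mult.assoc)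
qed

lemma has_integral_kernel:
  assumes s: "s \<in> {a<..T}" and \<rho>: "0 < \<rho>"
  shows "((\<lambda>r. kernel \<rho> s r) has_integral (\<phi> s - \<phi> a) powr \<rho> / \<rho>) {a..s}"
proof -
  have "Gamma (\<rho> + 1) = \<rho> * Gamma \<rho>"
    using \<rho> by (rule Gamma_real_plus1)
  moreover have "Gamma \<rho> \<noteq> 0"
    using Gamma_real_pos[OF \<rho>] by linarith
  ultimately have "Beta 1 \<rho> = 1 / \<rho>"
    by (simp add: Beta_def add.commute)
  then have "((\<lambda>r. kernel \<rho> s r * (\<phi> r - \<phi> a) powr 0) has_integral (\<phi> s - \<phi> a) powr \<rho> / \<rho>) {a..s}"
    using has_integral_kernel_powr[OF s \<rho>, of 0] by simp
  then show ?thesis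
    by (rule has_integral_spike_finite[of "{a}", rotated 2])
       (use s phi_diff_pos in \<open>auto simp: less_imp_neq[symmetric]\<close>)
qed

lemma kernel_integrable:
  assumes s: "s \<in> {a<..T}" and \<rho>: "0 < \<rho>"
    and y: "y \<in> borel_measurable (lebesgue_on {a..s})"
    and bound: "\<And>r. r \<in> {a..s} \<Longrightarrow> \<bar>y r\<bar> \<le> M"
  shows "(\<lambda>r. kernel \<rho> s r * y r) integrable_on {a..s}"
proof (rule measurable_bounded_by_integrable_imp_integrable_real)
  have sub: "{a..s} \<subseteq> {a..T}" using s by auto
  have "\<phi>' \<in> borel_measurable (lebesgue_on {a..s})" "\<phi> \<in> borel_measurable (lebesgue_on {a..s})"
    using continuous_on_subset[OF deriv_continuous sub] continuous_on_subset[OF phi_continuous sub]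
    by (auto intro: continuous_imp_measurable_on_sets_lebesgue)
  then show "(\<lambda>r. kernel \<rho> s r * y r) \<in> borel_measurable (lebesgue_on {a..s})"
    by (intro borel_measurable_times powr_real_measurable borel_measurable_diff y borel_measurable_const)
  show "(\<lambda>r. kernel \<rho> s r * M) integrable_on {a..s}"
    using has_integral_mult_left[OF has_integral_kernel[OF s \<rho>], of M] by blast
  fix r assume r: "r \<in> {a..s}"
  then have "0 \<le> kernel \<rho> s r"
    using sub by (intro kernel_nonneg) auto
  then have "\<bar>kernel \<rho> s r * y r\<bar> = kernel \<rho> s r * \<bar>y r\<bar>"
    by (simp only: abs_mult[of "kernel \<rho> s r" "y r"] abs_of_nonneg)
  also have "\<dots> \<le> kernel \<rho> s r * M"
    using bound[OF r] \<open>0 \<le> kernel \<rho> s r\<close> by (rule mult_left_mono)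
  finally show "\<bar>kernel \<rho> s r * y r\<bar> \<le> kernel \<rho> s r * M" .
qed auto

lemma kernel_integral_diff_le:
  assumes s: "s \<in> {a<..T}" and \<rho>: "0 < \<rho>" and N: "finite N"
    and g: "(\<lambda>r. kernel \<rho> s r * g r) integrable_on {a..s}"
    and h: "(\<lambda>r. kernel \<rho> s r * h r) integrable_on {a..s}"
    and z: "(\<lambda>r. kernel \<rho> s r * z r) integrable_on {a..s}"
    and le: "\<And>r. r \<in> {a..s} - N \<Longrightarrow> \<bar>g r - h r\<bar> \<le> z r + \<epsilon>"
  shows "\<bar>integral {a..s} (\<lambda>r. kernel \<rho> s r * g r) - integral {a..s} (\<lambda>r. kernel \<rho> s r * h r)\<bar>
         \<le> integral {a..s} (\<lambda>r. kernel \<rho> s r * z r) + \<epsilon> * ((\<phi> s - \<phi> a) powr \<rho> / \<rho>)"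
proof -
  let ?d = "\<lambda>r. kernel \<rho> s r * g r - kernel \<rho> s r * h r"
  let ?b = "\<lambda>r. kernel \<rho> s r * z r + \<epsilon> * kernel \<rho> s r"
  have bI: "(?b has_integral integral {a..s} (\<lambda>r. kernel \<rho> s r * z r) + \<epsilon> * ((\<phi> s - \<phi> a) powr \<rho> / \<rho>)) {a..s}"
    by (intro has_integral_add integrable_integral z has_integral_mult_right has_integral_kernel s \<rho>)
  have dI: "?d integrable_on {a..s}" using g h by (rule integrable_diff)
  have bound: "\<bar>?d r\<bar> \<le> ?b r" if "r \<in> {a..s} - N" for r
  proof -
    have "0 \<le> kernel \<rho> s r" using that s by (intro kernel_nonneg) auto
    moreover have "?d r = kernel \<rho> s r * (g r - h r)" by (simp add: right_diff_distrib)
    ultimately have "\<bar>?d r\<bar> = kernel \<rho> s r * \<bar>g r - h r\<bar>"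
      by (simp only: abs_mult[of "kernel \<rho> s r" "g r - h r"] abs_of_nonneg)
    also have "\<dots> \<le> kernel \<rho> s r * (z r + \<epsilon>)"
      using le[OF that] \<open>0 \<le> kernel \<rho> s r\<close> by (rule mult_left_mono)
    finally show ?thesis by (simp add: algebra_simps)
  qed
  have bI': "?b integrable_on {a..s}" using bI by blast
  have "integral {a..s} ?d \<le> integral {a..s} ?b"
    by (rule integral_le_off_finite[OF dI bI' N]) (use bound abs_le_iff in blast)
  moreover have "integral {a..s} (\<lambda>r. - ?d r) \<le> integral {a..s} ?b"
    by (rule integral_le_off_finite[OF integrable_neg[OF dI] bI' N]) (use bound abs_le_iff in blast)
  then have "- integral {a..s} ?d \<le> integral {a..s} ?b"
    by (simp only: integral_neg)
  ultimately have "\<bar>integral {a..s} ?d\<bar> \<le> integral {a..s} ?b" by linarith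
  then show ?thesis
    using bI integral_diff[OF g h] by (simp add: integral_unique)
qed

lemma weighted_bound_le:
  assumes s: "s \<in> {a<..T}" and \<sigma>: "\<sigma> \<le> 1" and \<rho>: "0 < \<rho>" and \<epsilon>: "0 \<le> \<epsilon>" and I: "0 \<le> I"
    and D: "\<bar>D\<bar> \<le> I + \<epsilon> * ((\<phi> s - \<phi> a) powr \<rho> / \<rho>)"
  shows "(\<phi> s - \<phi> a) powr (1 - \<sigma>) * \<bar>D\<bar> / Gamma \<rho>
         \<le> (\<phi> T - \<phi> a) powr (1 - \<sigma> + \<rho>) / Gamma (\<rho> + 1) * \<epsilon>
            + (\<phi> T - \<phi> a) powr (1 - \<sigma>) / Gamma \<rho> * I"
proof -
  define L where "L = \<phi> s - \<phi> a"
  have L: "0 < L" "L \<le> \<phi> T - \<phi> a"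
    using phi_diff_pos[OF s] phi_mono[of s T] s a_less_T by (auto simp: L_def)
  have "0 < Gamma \<rho>" using \<rho> by simp
  then have \<Gamma>: "0 < Gamma \<rho>" "Gamma \<rho> \<noteq> 0" "Gamma (\<rho> + 1) = \<rho> * Gamma \<rho>"
    using Gamma_real_plus1[OF \<rho>] by linarith+
  have "L powr (1 - \<sigma>) * \<bar>D\<bar> / Gamma \<rho> \<le> L powr (1 - \<sigma>) * (I + \<epsilon> * (L powr \<rho> / \<rho>)) / Gamma \<rho>"
    using D \<Gamma> by (intro divide_right_mono mult_left_mono) (auto simp: L_def)
  also have "\<dots> = L powr (1 - \<sigma> + \<rho>) / Gamma (\<rho> + 1) * \<epsilon> + L powr (1 - \<sigma>) / Gamma \<rho> * I"
    using \<Gamma> \<rho> powr_add[of L "1 - \<sigma>" \<rho>] by (simp add: field_simps)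
  also have "\<dots> \<le> (\<phi> T - \<phi> a) powr (1 - \<sigma> + \<rho>) / Gamma (\<rho> + 1) * \<epsilon>
                 + (\<phi> T - \<phi> a) powr (1 - \<sigma>) / Gamma \<rho> * I"
    using L \<sigma> \<rho> \<Gamma> \<epsilon> I by (intro add_mono mult_right_mono divide_right_mono powr_mono2) auto
  finally show ?thesis unfolding L_def .
qed

lemma has_integral_kernel_mittag_leffler_term:
  assumes s: "s \<in> {a<..T}" and \<rho>: "0 < \<rho>"
  shows "((\<lambda>r. G / Gamma \<rho> * (kernel \<rho> s r * mittag_leffler_term \<rho> (G * (\<phi> r - \<phi> a) powr \<rho>) j))
           has_integral mittag_leffler_term \<rho> (G * (\<phi> s - \<phi> a) powr \<rho>) (Suc j)) {a..s}"
proof -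
  have pow: "(G * L powr \<rho>) ^ i = G ^ i * L powr (\<rho> * real i)" if "0 < L" for L i
  proof -
    have "(L powr \<rho>) ^ i = (L powr \<rho>) powr real i"
      using that by (simp add: powr_realpow)
    then show ?thesis
      by (simp add: power_mult_distrib powr_powr)
  qed
  define c where "c = G / Gamma \<rho> * (G ^ j / Gamma (\<rho> * real j + 1))"
  have Gj: "Gamma (\<rho> * real j + 1) \<noteq> 0" "Gamma \<rho> \<noteq> 0"
    using Gamma_real_pos[OF \<rho>] Gamma_affine_pos[of \<rho> j] \<rho> by linarith+
  have Suc: "\<rho> * real j + 1 + \<rho> = \<rho> * real (Suc j) + 1" "\<rho> + \<rho> * real j = \<rho> * real (Suc j)"
    by (simp_all add: algebra_simps)
  have "c * (Beta (\<rho> * real j + 1) \<rho> * (\<phi> s - \<phi> a) powr (\<rho> + \<rho> * real j))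
        = G ^ Suc j * (\<phi> s - \<phi> a) powr (\<rho> * real (Suc j)) / Gamma (\<rho> * real (Suc j) + 1)"
    unfolding Beta_def Suc c_def using Gj by (simp add: field_simps)
  also have "\<dots> = mittag_leffler_term \<rho> (G * (\<phi> s - \<phi> a) powr \<rho>) (Suc j)"
    unfolding mittag_leffler_term_def pow[OF phi_diff_pos[OF s]] ..
  finally have val: "c * (Beta (\<rho> * real j + 1) \<rho> * (\<phi> s - \<phi> a) powr (\<rho> + \<rho> * real j))
                       = mittag_leffler_term \<rho> (G * (\<phi> s - \<phi> a) powr \<rho>) (Suc j)" .
  have "((\<lambda>r. c * (kernel \<rho> s r * (\<phi> r - \<phi> a) powr (\<rho> * real j))) has_integral
          mittag_leffler_term \<rho> (G * (\<phi> s - \<phi> a) powr \<rho>) (Suc j)) {a..s}"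
    using has_integral_mult_right[OF has_integral_kernel_powr[OF s \<rho>, of "\<rho> * real j"], of c] \<rho>
    unfolding val by simp
  then show ?thesis
  proof (rule has_integral_spike_finite[of "{a}", rotated 2])
    fix r assume "r \<in> {a..s} - {a}"
    with s have "0 < \<phi> r - \<phi> a" by (intro phi_diff_pos) auto
    then show "G / Gamma \<rho> * (kernel \<rho> s r * mittag_leffler_term \<rho> (G * (\<phi> r - \<phi> a) powr \<rho>) j)
             = c * (kernel \<rho> s r * (\<phi> r - \<phi> a) powr (\<rho> * real j))"
      unfolding mittag_leffler_term_def pow[OF \<open>0 < \<phi> r - \<phi> a\<close>] c_def by simp
  qed simp
qed

lemma has_integral_kernel_mittag_leffler_partial_sum:
  fixes G :: real
  assumes s: "s \<in> {a<..T}" and \<rho>: "0 < \<rho>"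
  defines "E x j \<equiv> mittag_leffler_term \<rho> (G * (\<phi> x - \<phi> a) powr \<rho>) j"
  shows "((\<lambda>x. G / Gamma \<rho> * (kernel \<rho> s x * (A * (\<Sum>j<n. E x j) + M * E x n))) has_integral
           A * (\<Sum>j<n. E s (Suc j)) + M * E s (Suc n)) {a..s}"
proof -
  have "((\<lambda>x. A * (\<Sum>j<n. G / Gamma \<rho> * (kernel \<rho> s x * E x j)) + M * (G / Gamma \<rho> * (kernel \<rho> s x * E x n)))
          has_integral A * (\<Sum>j<n. E s (Suc j)) + M * E s (Suc n)) {a..s}"
    unfolding E_def
    by (intro has_integral_add has_integral_mult_right has_integral_sum
          has_integral_kernel_mittag_leffler_term s \<rho>) auto
  then show ?thesis
    by (rule has_integral_eq[rotated])
       (simp add: sum_distrib_left sum_distrib_right mult.assoc mult.left_commute distrib_left)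
qed

lemma frac_gronwall_iterate:
  assumes b: "b \<in> {a<..T}" and \<rho>: "0 < \<rho>" and G: "0 \<le> G"
    and bounded: "\<And>r. r \<in> {a<..b} \<Longrightarrow> y r \<le> M"
    and integrable: "\<And>s. s \<in> {a<..b} \<Longrightarrow> (\<lambda>r. kernel \<rho> s r * y r) integrable_on {a..s}"
    and ineq: "\<And>s. s \<in> {a<..b} \<Longrightarrow>
                 y s \<le> A + G / Gamma \<rho> * integral {a..s} (\<lambda>r. kernel \<rho> s r * y r)"
    and r: "r \<in> {a<..b}"
  shows "y r \<le> A * (\<Sum>j<n. mittag_leffler_term \<rho> (G * (\<phi> r - \<phi> a) powr \<rho>) j)
                + M * mittag_leffler_term \<rho> (G * (\<phi> r - \<phi> a) powr \<rho>) n"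
  using r
proof (induction n arbitrary: r)
  case 0
  then show ?case using bounded by simp
next
  case (Suc n)
  define E where "E x j = mittag_leffler_term \<rho> (G * (\<phi> x - \<phi> a) powr \<rho>) j" for x j
  define B where "B x = A * (\<Sum>j<n. E x j) + M * E x n" for x
  let ?c = "G / Gamma \<rho>"
  have rT: "r \<in> {a<..T}" using Suc.prems b by auto
  have KB: "((\<lambda>x. ?c * (kernel \<rho> r x * B x)) has_integral
              A * (\<Sum>j<n. E r (Suc j)) + M * E r (Suc n)) {a..r}"
    unfolding B_def E_def by (rule has_integral_kernel_mittag_leffler_partial_sum[OF rT \<rho>])
  have "?c * integral {a..r} (\<lambda>x. kernel \<rho> r x * y x) = integral {a..r} (\<lambda>x. ?c * (kernel \<rho> r x * y x))"
    by simp
  also have "\<dots> \<le> integral {a..r} (\<lambda>x. ?c * (kernel \<rho> r x * B x))"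
  proof (rule integral_le_off_finite[of _ _ _ "{a}"])
    show "(\<lambda>x. ?c * (kernel \<rho> r x * y x)) integrable_on {a..r}"
      using has_integral_mult_right[OF integrable_integral[OF integrable[OF Suc.prems]]] by blast
    show "(\<lambda>x. ?c * (kernel \<rho> r x * B x)) integrable_on {a..r}"
      using KB by blast
    fix x assume x: "x \<in> {a..r} - {a}"
    then have "x \<in> {a<..b}" using Suc.prems by auto
    then have "y x \<le> B x" unfolding B_def E_def by (rule Suc.IH)
    moreover have "0 \<le> kernel \<rho> r x"
      using x rT by (intro kernel_nonneg) auto
    then have "0 \<le> ?c * kernel \<rho> r x"
      using G \<rho> by simp
    ultimately show "?c * (kernel \<rho> r x * y x) \<le> ?c * (kernel \<rho> r x * B x)"
      by (metis mult.assoc mult_left_mono)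
  qed simp
  also have "\<dots> = A * (\<Sum>j<n. E r (Suc j)) + M * E r (Suc n)"
    using KB by blast
  finally have "y r \<le> A + (A * (\<Sum>j<n. E r (Suc j)) + M * E r (Suc n))"
    using ineq[OF Suc.prems] by linarith
  also have "\<dots> = A * (\<Sum>j<Suc n. E r j) + M * E r (Suc n)"
    unfolding sum.lessThan_Suc_shift by (simp add: E_def distrib_left)
  finally show ?case unfolding E_def .
qed

lemma frac_gronwall:
  assumes b: "b \<in> {a<..T}" and \<rho>: "0 < \<rho>" and G: "0 \<le> G" and A: "0 \<le> A"
    and bounded: "\<And>r. r \<in> {a<..b} \<Longrightarrow> y r \<le> M"
    and integrable: "\<And>s. s \<in> {a<..b} \<Longrightarrow> (\<lambda>r. kernel \<rho> s r * y r) integrable_on {a..s}"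
    and ineq: "\<And>s. s \<in> {a<..b} \<Longrightarrow>
                 y s \<le> A + G / Gamma \<rho> * integral {a..s} (\<lambda>r. kernel \<rho> s r * y r)"
    and s: "s \<in> {a<..b}"
  shows "y s \<le> A * mittag_leffler \<rho> (G * (\<phi> b - \<phi> a) powr \<rho>)"
proof -
  define E where "E x j = mittag_leffler_term \<rho> (G * (\<phi> x - \<phi> a) powr \<rho>) j" for x j
  have sT: "s \<in> {a..T}" and bT: "b \<in> {a..T}" using s b by auto
  have "G * (\<phi> s - \<phi> a) powr \<rho> \<le> G * (\<phi> b - \<phi> a) powr \<rho>"
    using phi_diff_pos[of s] phi_mono[OF sT bT] s b \<rho> G by (intro mult_left_mono powr_mono2) auto
  then have E_le: "E s j \<le> E b j" for j
    unfolding E_def using G \<rho> by (intro mittag_leffler_term_mono) auto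
  have E_nonneg: "0 \<le> E x j" for x j
    unfolding E_def using G \<rho> by (intro mittag_leffler_term_nonneg) auto
  have summable: "summable (E b)"
    unfolding E_def using G \<rho> by (intro summable_mittag_leffler_term) auto
  have bound: "y s \<le> A * suminf (E b) + \<bar>M\<bar> * E b n" for n
  proof -
    have "y s \<le> A * (\<Sum>j<n. E s j) + M * E s n"
      unfolding E_def by (rule frac_gronwall_iterate[OF b \<rho> G bounded integrable ineq s])
    also have "\<dots> \<le> A * suminf (E b) + \<bar>M\<bar> * E b n"
    proof (intro add_mono mult_left_mono)
      have "(\<Sum>j<n. E s j) \<le> (\<Sum>j<n. E b j)" by (intro sum_mono E_le)
      also have "\<dots> \<le> suminf (E b)" using summable E_nonneg by (intro sum_le_suminf) auto
      finally show "(\<Sum>j<n. E s j) \<le> suminf (E b)" .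
      show "M * E s n \<le> \<bar>M\<bar> * E b n"
        using E_le[of n] E_nonneg[of s n] by (metis abs_ge_self abs_ge_zero mult_mono)
    qed (use A in auto)
    finally show ?thesis .
  qed
  have "(\<lambda>n. A * suminf (E b) + \<bar>M\<bar> * E b n) \<longlonglongrightarrow> A * suminf (E b) + \<bar>M\<bar> * 0"
    by (intro tendsto_intros summable_LIMSEQ_zero[OF summable])
  then have "y s \<le> A * suminf (E b)"
    using bound by (intro LIMSEQ_le_const) auto
  then show ?thesis
    by (simp add: E_def[abs_def] mittag_leffler_eq_suminf)
qed

end

locale impulsive_frac_problem = frac_scale +
  fixes m :: nat and t :: "nat \<Rightarrow> real"
  assumes t_0: "t 0 = a" and t_Suc_m: "t (Suc m) = T"
    and t_less_Suc: "\<And>k. k \<le> m \<Longrightarrow> t k < t (Suc k)"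
begin

lemma t_less: "i < j \<Longrightarrow> j \<le> Suc m \<Longrightarrow> t i < t j"
proof (induction j)
  case (Suc j)
  then have "t j < t (Suc j)" by (intro t_less_Suc) auto
  with Suc show ?case by (cases "i = j") auto
qed simp

lemma t_le: "i \<le> j \<Longrightarrow> j \<le> Suc m \<Longrightarrow> t i \<le> t j"
  using t_less[of i j] by (cases "i = j") auto

lemma t_mem: "k \<in> {1..Suc m} \<Longrightarrow> t k \<in> {a<..T}"
  using t_less[of 0 k] t_le[of k "Suc m"] t_0 t_Suc_m by auto

lemma piecewise_continuous_measurable:
  assumes s: "s \<in> {a..T}" and cont: "\<And>k. k \<le> m \<Longrightarrow> continuous_on {t k<..t (Suc k)} y"
  shows "y \<in> borel_measurable (lebesgue_on {a..s})"
proof (rule measurable_piecewise_restrict[of "insert {a} ((\<lambda>k. {t k<..t (Suc k)}) ` {..m})"])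
  show "countable (insert {a} ((\<lambda>k. {t k<..t (Suc k)}) ` {..m}))" by simp
next
  fix \<Omega> assume \<Omega>: "\<Omega> \<in> insert {a} ((\<lambda>k. {t k<..t (Suc k)}) ` {..m})"
  then have leb: "\<Omega> \<in> sets lebesgue" by auto
  then show "\<Omega> \<inter> space (lebesgue_on {a..s}) \<in> sets (lebesgue_on {a..s})"
    by (simp add: sets_restrict_space_iff sets.Int)
  have "continuous_on ({a..s} \<inter> \<Omega>) y"
    using \<Omega> s cont by (auto intro: continuous_on_subset simp: continuous_on_sing)
  then have "y \<in> borel_measurable (lebesgue_on ({a..s} \<inter> \<Omega>))"
    using leb by (intro continuous_imp_measurable_on_sets_lebesgue) auto
  moreover have "restrict_space (lebesgue_on {a..s}) \<Omega> = lebesgue_on ({a..s} \<inter> \<Omega>)"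
    using leb by (intro restrict_restrict_space) auto
  ultimately show "y \<in> borel_measurable (restrict_space (lebesgue_on {a..s}) \<Omega>)" by simp
next
  show "space (lebesgue_on {a..s}) \<subseteq> \<Union> (insert {a} ((\<lambda>k. {t k<..t (Suc k)}) ` {..m}))"
  proof
    fix r assume "r \<in> space (lebesgue_on {a..s})"
    then have r: "a \<le> r" "r \<le> s" by auto
    show "r \<in> \<Union> (insert {a} ((\<lambda>k. {t k<..t (Suc k)}) ` {..m}))"
    proof (cases "r = a")
      case False
      then obtain k where "k \<le> m" "t k < r" "r \<le> t (Suc k)"
        using partition_cover[of t r m] r s t_0 t_Suc_m by auto
      then show ?thesis by auto
    qed simp
  qed
qed

lemma PC_left_limit:
  assumes u: "u \<in> PC_space \<phi> \<phi>' a T t m \<sigma>" and k: "k \<in> {1..m}"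
  shows "Lim (at_left (t k)) u = u (t k)"
proof -
  obtain j where j: "k = Suc j" "j \<le> m" using k by (cases k) auto
  define w where "w s = (\<phi> s - \<phi> a) powr (1 - \<sigma>) * u s" for s
  have tk: "t j < t k" "t k \<in> {a<..T}" "a \<le> t j"
    using t_less_Suc[of j] t_mem[of k] t_le[of 0 j] j t_0 by auto
  define p where "p = (t j + t k) / 2"
  have p: "t j < p" "p < t k" using tk by (auto simp: p_def)
  have at: "at (t k) within {p..t k} = at_left (t k)"
    using p by (intro at_within_Icc_at_left)
  have "continuous_on {p..t k} w"
    using u j p unfolding PC_space_def w_def by (auto intro: continuous_on_subset)
  then have "(w \<longlongrightarrow> w (t k)) (at_left (t k))"
    using p by (auto simp: continuous_on_def at[symmetric])
  moreover have "continuous_on {p..t k} \<phi>"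
    using p tk by (auto intro: continuous_on_subset[OF phi_continuous])
  then have "(\<phi> \<longlongrightarrow> \<phi> (t k)) (at_left (t k))"
    using p by (auto simp: continuous_on_def at[symmetric])
  ultimately have "((\<lambda>s. w s / (\<phi> s - \<phi> a) powr (1 - \<sigma>)) \<longlongrightarrow> w (t k) / (\<phi> (t k) - \<phi> a) powr (1 - \<sigma>))
                    (at_left (t k))"
    using phi_diff_pos[OF tk(2)] by (intro tendsto_intros) auto
  moreover have "\<forall>\<^sub>F s in at_left (t k). w s / (\<phi> s - \<phi> a) powr (1 - \<sigma>) = u s"
  proof (rule eventually_mono[OF eventually_at_left_real[OF p(2)]])
    fix s assume "s \<in> {p<..<t k}"
    then have "0 < \<phi> s - \<phi> a" using p tk by (intro phi_diff_pos) auto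
    then show "w s / (\<phi> s - \<phi> a) powr (1 - \<sigma>) = u s" by (simp add: w_def)
  qed
  moreover have "w (t k) / (\<phi> (t k) - \<phi> a) powr (1 - \<sigma>) = u (t k)"
    using phi_diff_pos[OF tk(2)] by (simp add: w_def)
  ultimately have "(u \<longlongrightarrow> u (t k)) (at_left (t k))"
    using Lim_transform_eventually by fastforce
  then show ?thesis by (intro tendsto_Lim) auto
qed

lemma PC_weighted_bounded:
  assumes "u \<in> PC_space \<phi> \<phi>' a T t m \<sigma>"
  obtains M where "\<And>r. r \<in> {a<..T} \<Longrightarrow> \<bar>(\<phi> r - \<phi> a) powr (1 - \<sigma>) * u r\<bar> \<le> M"
  using assms unfolding PC_space_def bounded_iff by fastforce

lemma PC_weighted_difference_bounded:
  assumes u: "u \<in> PC_space \<phi> \<phi>' a T t m \<sigma>" and v: "v \<in> PC_space \<phi> \<phi>' a T t m \<sigma>"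
  obtains M where "\<And>r. r \<in> {a<..T} \<Longrightarrow> (\<phi> r - \<phi> a) powr (1 - \<sigma>) * \<bar>u r - v r\<bar> \<le> M"
proof -
  obtain Mu Mv where Mu: "\<And>r. r \<in> {a<..T} \<Longrightarrow> \<bar>(\<phi> r - \<phi> a) powr (1 - \<sigma>) * u r\<bar> \<le> Mu"
    and Mv: "\<And>r. r \<in> {a<..T} \<Longrightarrow> \<bar>(\<phi> r - \<phi> a) powr (1 - \<sigma>) * v r\<bar> \<le> Mv"
    using PC_weighted_bounded[OF u] PC_weighted_bounded[OF v] by metis
  have "(\<phi> r - \<phi> a) powr (1 - \<sigma>) * \<bar>u r - v r\<bar> \<le> Mu + Mv" if r: "r \<in> {a<..T}" for r
  proof -
    have "(\<phi> r - \<phi> a) powr (1 - \<sigma>) * \<bar>u r - v r\<bar>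
          = \<bar>(\<phi> r - \<phi> a) powr (1 - \<sigma>) * u r - (\<phi> r - \<phi> a) powr (1 - \<sigma>) * v r\<bar>"
      by (simp add: abs_mult right_diff_distrib[symmetric])
    also have "\<dots> \<le> \<bar>(\<phi> r - \<phi> a) powr (1 - \<sigma>) * u r\<bar> + \<bar>(\<phi> r - \<phi> a) powr (1 - \<sigma>) * v r\<bar>"
      by (rule abs_triangle_ineq4)
    finally show ?thesis using Mu[OF r] Mv[OF r] by linarith
  qed
  then show ?thesis by (rule that)
qed

lemma PC_weighted_difference_integrable:
  assumes u: "u \<in> PC_space \<phi> \<phi>' a T t m \<sigma>" and v: "v \<in> PC_space \<phi> \<phi>' a T t m \<sigma>"
    and s: "s \<in> {a<..T}" and \<rho>: "0 < \<rho>"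
  shows "(\<lambda>r. kernel \<rho> s r * ((\<phi> r - \<phi> a) powr (1 - \<sigma>) * \<bar>u r - v r\<bar>)) integrable_on {a..s}"
proof -
  define wu where "wu = (\<lambda>r. (\<phi> r - \<phi> a) powr (1 - \<sigma>) * u r)"
  define wv where "wv = (\<lambda>r. (\<phi> r - \<phi> a) powr (1 - \<sigma>) * v r)"
  have y: "(\<phi> r - \<phi> a) powr (1 - \<sigma>) * \<bar>u r - v r\<bar> = \<bar>wu r - wv r\<bar>" for r
    by (simp add: wu_def wv_def abs_mult right_diff_distrib[symmetric])
  have "continuous_on {t k<..t (Suc k)} (\<lambda>r. \<bar>wu r - wv r\<bar>)" if "k \<le> m" for k
  proof -
    have "continuous_on {t k<..t (Suc k)} wu" "continuous_on {t k<..t (Suc k)} wv"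
      using u v that unfolding PC_space_def wu_def wv_def by auto
    then show ?thesis by (intro continuous_intros)
  qed
  then have meas: "(\<lambda>r. (\<phi> r - \<phi> a) powr (1 - \<sigma>) * \<bar>u r - v r\<bar>) \<in> borel_measurable (lebesgue_on {a..s})"
    unfolding y using s by (intro piecewise_continuous_measurable) auto
  obtain M where M: "\<And>r. r \<in> {a<..T} \<Longrightarrow> (\<phi> r - \<phi> a) powr (1 - \<sigma>) * \<bar>u r - v r\<bar> \<le> M"
    using PC_weighted_difference_bounded[OF u v] by metis
  have "\<bar>(\<phi> r - \<phi> a) powr (1 - \<sigma>) * \<bar>u r - v r\<bar>\<bar> \<le> \<bar>M\<bar>" if r: "r \<in> {a..s}" for r
  proof (cases "r = a")
    case False
    with r s have "r \<in> {a<..T}" by auto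
    then show ?thesis using M[of r] by simp
  qed simp \<comment> \<open>at \<open>r = a\<close> the weight is \<open>0 powr (1 - \<sigma>) = 0\<close>\<close>
  then show ?thesis
    by (rule kernel_integrable[OF s \<rho> meas])
qed

lemma solution_weighted_eq:
  assumes sol: "is_solution \<phi> \<phi>' a T t m \<sigma> \<rho> f Jk ua u" and s: "s \<in> {a<..T}" and \<rho>: "0 < \<rho>"
  shows "(\<phi> s - \<phi> a) powr (1 - \<sigma>) * u s
         = (ua + (\<Sum>k\<in>{k\<in>{1..m}. t k < s}. Jk k (u (t k)))) / Gamma \<sigma>
           + (\<phi> s - \<phi> a) powr (1 - \<sigma>) * integral {a..s} (\<lambda>r. kernel \<rho> s r * f r (u r)) / Gamma \<rho>"
proof -
  let ?S = "{k\<in>{1..m}. t k < s}"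
  have u: "u \<in> PC_space \<phi> \<phi>' a T t m \<sigma>" using sol by (simp add: is_solution_def)
  have "(\<Sum>k\<in>?S. Jk k (Lim (at_left (t k)) u)) = (\<Sum>k\<in>?S. Jk k (u (t k)))"
    using PC_left_limit[OF u] by (intro sum.cong) auto
  moreover have "frac_int \<phi> \<phi>' a \<rho> (\<lambda>r. f r (u r)) s = integral {a..s} (\<lambda>r. kernel \<rho> s r * f r (u r)) / Gamma \<rho>"
    using \<rho> by (simp add: frac_int_def)
  ultimately have "u s = (\<phi> s - \<phi> a) powr (\<sigma> - 1) / Gamma \<sigma> * (ua + (\<Sum>k\<in>?S. Jk k (u (t k))))
                         + integral {a..s} (\<lambda>r. kernel \<rho> s r * f r (u r)) / Gamma \<rho>"
    using sol s unfolding is_solution_def by auto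
  moreover have "(\<phi> s - \<phi> a) powr (1 - \<sigma>) * (\<phi> s - \<phi> a) powr (\<sigma> - 1) = 1"
    using phi_diff_pos[OF s] by (simp add: powr_add[symmetric])
  ultimately show ?thesis
    by (simp add: distrib_left mult.assoc[symmetric] add_divide_distrib)
qed

lemma solution_difference_eq:
  assumes solu: "is_solution \<phi> \<phi>' a T t m \<sigma> \<rho> f Jk ua u"
    and solv: "is_solution \<phi> \<phi>' a T t m \<sigma> \<rho> f' Jk' va v"
    and s: "s \<in> {a<..T}" and \<rho>: "0 < \<rho>"
  shows "(\<phi> s - \<phi> a) powr (1 - \<sigma>) * (u s - v s)
         = (ua - va + (\<Sum>k\<in>{k\<in>{1..m}. t k < s}. Jk k (u (t k)) - Jk' k (v (t k)))) / Gamma \<sigma>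
           + (\<phi> s - \<phi> a) powr (1 - \<sigma>)
             * (integral {a..s} (\<lambda>r. kernel \<rho> s r * f r (u r))
                - integral {a..s} (\<lambda>r. kernel \<rho> s r * f' r (v r))) / Gamma \<rho>"
proof -
  let ?S = "{k\<in>{1..m}. t k < s}"
  have "(\<phi> s - \<phi> a) powr (1 - \<sigma>) * (u s - v s)
        = (\<phi> s - \<phi> a) powr (1 - \<sigma>) * u s - (\<phi> s - \<phi> a) powr (1 - \<sigma>) * v s"
    by (simp add: right_diff_distrib)
  also have "\<dots> = ((ua + (\<Sum>k\<in>?S. Jk k (u (t k)))) - (va + (\<Sum>k\<in>?S. Jk' k (v (t k))))) / Gamma \<sigma>
           + (\<phi> s - \<phi> a) powr (1 - \<sigma>)
             * (integral {a..s} (\<lambda>r. kernel \<rho> s r * f r (u r))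
                - integral {a..s} (\<lambda>r. kernel \<rho> s r * f' r (v r))) / Gamma \<rho>"
    unfolding solution_weighted_eq[OF solu s \<rho>] solution_weighted_eq[OF solv s \<rho>]
    by (simp add: diff_divide_distrib right_diff_distrib)
  also have "(ua + (\<Sum>k\<in>?S. Jk k (u (t k)))) - (va + (\<Sum>k\<in>?S. Jk' k (v (t k))))
             = ua - va + (\<Sum>k\<in>?S. Jk k (u (t k)) - Jk' k (v (t k)))"
    by (simp add: sum_subtractf)
  finally show ?thesis .
qed

lemma weighted_difference_estimate:
  assumes solu: "is_solution \<phi> \<phi>' a T t m \<sigma> \<rho> f Jk ua u"
    and solv: "is_solution \<phi> \<phi>' a T t m \<sigma> \<rho> f' Jk' va v"
    and \<sigma>: "0 < \<sigma>" "\<sigma> \<le> 1" and \<rho>: "0 < \<rho>" and \<epsilon>f: "0 \<le> \<epsilon>f"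
    and y: "\<And>r. y r = (\<phi> r - \<phi> a) powr (1 - \<sigma>) * \<bar>u r - v r\<bar>"
    and Lip_f: "\<And>r. r \<in> {a<..T} - t ` {1..m} \<Longrightarrow> \<bar>f r (u r) - f r (v r)\<bar> \<le> y r"
    and Lip_J: "\<And>k. k \<in> {1..m} \<Longrightarrow> \<bar>Jk k (u (t k)) - Jk k (v (t k))\<bar> \<le> y (t k)"
    and ua: "\<bar>ua - va\<bar> \<le> \<delta>a"
    and f': "\<And>r w. r \<in> {a<..T} \<Longrightarrow> \<bar>f r w - f' r w\<bar> \<le> \<epsilon>f"
    and J': "\<And>k w. k \<in> {1..m} \<Longrightarrow> \<bar>Jk k w - Jk' k w\<bar> \<le> \<epsilon>J"
    and s: "s \<in> {a<..T}"
  shows "y s \<le> (\<delta>a + (\<Sum>k\<in>{k\<in>{1..m}. t k < s}. y (t k) + \<epsilon>J)) / Gamma \<sigma>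
               + (\<phi> T - \<phi> a) powr (1 - \<sigma> + \<rho>) / Gamma (\<rho> + 1) * \<epsilon>f
               + (\<phi> T - \<phi> a) powr (1 - \<sigma>) / Gamma \<rho> * integral {a..s} (\<lambda>r. kernel \<rho> s r * y r)"
proof -
  let ?S = "{k\<in>{1..m}. t k < s}"
  define L where "L = \<phi> s - \<phi> a"
  define Iu where "Iu = integral {a..s} (\<lambda>r. kernel \<rho> s r * f r (u r))"
  define Iv where "Iv = integral {a..s} (\<lambda>r. kernel \<rho> s r * f' r (v r))"
  define Iy where "Iy = integral {a..s} (\<lambda>r. kernel \<rho> s r * y r)"
  have \<Gamma>: "0 < Gamma \<sigma>"
    using \<sigma> by simp
  have u: "u \<in> PC_space \<phi> \<phi>' a T t m \<sigma>" and v: "v \<in> PC_space \<phi> \<phi>' a T t m \<sigma>"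
    using solu solv by (auto simp: is_solution_def)
  have yI: "(\<lambda>r. kernel \<rho> s r * y r) integrable_on {a..s}"
    unfolding y using PC_weighted_difference_integrable[OF u v s \<rho>] .
  have "\<bar>Jk k (u (t k)) - Jk' k (v (t k))\<bar> \<le> y (t k) + \<epsilon>J" if "k \<in> ?S" for k
    using Lip_J[of k] J'[of k "v (t k)"] that by auto
  then have "\<bar>\<Sum>k\<in>?S. Jk k (u (t k)) - Jk' k (v (t k))\<bar> \<le> (\<Sum>k\<in>?S. y (t k) + \<epsilon>J)"
    by (intro order_trans[OF sum_abs sum_mono])
  then have impulses: "\<bar>ua - va + (\<Sum>k\<in>?S. Jk k (u (t k)) - Jk' k (v (t k)))\<bar>
                         \<le> \<delta>a + (\<Sum>k\<in>?S. y (t k) + \<epsilon>J)"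
    using ua by linarith
  have diff: "\<bar>Iu - Iv\<bar> \<le> Iy + \<epsilon>f * (L powr \<rho> / \<rho>)"
    unfolding Iu_def Iv_def Iy_def L_def
  proof (rule kernel_integral_diff_le[OF s \<rho>, of "insert a (t ` {1..m})"])
    show "(\<lambda>r. kernel \<rho> s r * f r (u r)) integrable_on {a..s}"
      "(\<lambda>r. kernel \<rho> s r * f' r (v r)) integrable_on {a..s}"
      using solu solv s by (auto simp: is_solution_def)
    fix r assume "r \<in> {a..s} - insert a (t ` {1..m})"
    then have "r \<in> {a<..T} - t ` {1..m}" using s by auto
    then show "\<bar>f r (u r) - f' r (v r)\<bar> \<le> y r + \<epsilon>f"
      using Lip_f[of r] f'[of r "v r"] by auto
  qed (use yI in auto)
  have Iy: "0 \<le> Iy"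
    unfolding Iy_def using yI s
    by (intro integral_nonneg) (auto intro!: mult_nonneg_nonneg kernel_nonneg simp: y)
  have integral: "L powr (1 - \<sigma>) * \<bar>Iu - Iv\<bar> / Gamma \<rho>
      \<le> (\<phi> T - \<phi> a) powr (1 - \<sigma> + \<rho>) / Gamma (\<rho> + 1) * \<epsilon>f
         + (\<phi> T - \<phi> a) powr (1 - \<sigma>) / Gamma \<rho> * Iy"
    unfolding L_def by (rule weighted_bound_le[OF s \<sigma>(2) \<rho> \<epsilon>f Iy diff[unfolded L_def]])
  have "y s = \<bar>L powr (1 - \<sigma>) * (u s - v s)\<bar>"
    by (simp add: y L_def abs_mult)
  also have "\<dots> = \<bar>(ua - va + (\<Sum>k\<in>?S. Jk k (u (t k)) - Jk' k (v (t k)))) / Gamma \<sigma>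
                     + L powr (1 - \<sigma>) * (Iu - Iv) / Gamma \<rho>\<bar>"
    unfolding L_def Iu_def Iv_def solution_difference_eq[OF solu solv s \<rho>] ..
  also have "\<dots> \<le> \<bar>(ua - va + (\<Sum>k\<in>?S. Jk k (u (t k)) - Jk' k (v (t k)))) / Gamma \<sigma>\<bar>
                  + \<bar>L powr (1 - \<sigma>) * (Iu - Iv) / Gamma \<rho>\<bar>"
    by (rule abs_triangle_ineq)
  also have "\<dots> = \<bar>ua - va + (\<Sum>k\<in>?S. Jk k (u (t k)) - Jk' k (v (t k)))\<bar> / Gamma \<sigma>
                  + L powr (1 - \<sigma>) * \<bar>Iu - Iv\<bar> / Gamma \<rho>"
    using \<sigma> \<rho> by (simp add: abs_mult)
  also have "\<dots> \<le> (\<delta>a + (\<Sum>k\<in>?S. y (t k) + \<epsilon>J)) / Gamma \<sigma>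
                  + ((\<phi> T - \<phi> a) powr (1 - \<sigma> + \<rho>) / Gamma (\<rho> + 1) * \<epsilon>f
                     + (\<phi> T - \<phi> a) powr (1 - \<sigma>) / Gamma \<rho> * Iy)"
    using impulses integral \<Gamma> by (intro add_mono divide_right_mono) auto
  finally show ?thesis
    by (simp add: Iy_def add.assoc)
qed

lemma jump_sum_le_impulse_seq:
  assumes s: "s \<le> t (Suc i)" and i: "i \<le> m" and e: "0 \<le> e" and g: "0 < g"
    and nonneg: "\<And>k. k \<in> {1..m} \<Longrightarrow> 0 \<le> y (t k)"
    and earlier: "\<And>k. k \<in> {1..i} \<Longrightarrow> y (t k) \<le> impulse_seq B E e g (k - 1) * E"
  shows "B + (\<Sum>k\<in>{k\<in>{1..m}. t k < s}. y (t k) + e) / g \<le> impulse_seq B E e g i"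
proof -
  have "{k\<in>{1..m}. t k < s} \<subseteq> {1..i}"
  proof
    fix k assume k: "k \<in> {k\<in>{1..m}. t k < s}"
    have "k \<le> i"
    proof (rule ccontr)
      assume "\<not> k \<le> i"
      then have "t (Suc i) \<le> t k" using k by (intro t_le) auto
      with k s show False by auto
    qed
    with k show "k \<in> {1..i}" by auto
  qed
  then have "(\<Sum>k\<in>{k\<in>{1..m}. t k < s}. y (t k) + e) \<le> (\<Sum>k\<in>{1..i}. y (t k) + e)"
    using nonneg e i by (intro sum_mono2) auto
  also have "\<dots> \<le> (\<Sum>k\<in>{1..i}. impulse_seq B E e g (k - 1) * E + e)"
    using earlier by (intro sum_mono add_right_mono)
  finally show ?thesis
    using g impulse_seq_eq_sum[of B E e g i] by (simp add: divide_right_mono)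
qed

lemma impulsive_frac_gronwall:
  assumes \<rho>: "0 < \<rho>" and G: "0 \<le> G" and B: "0 \<le> B" and e: "0 \<le> e" and g: "0 < g"
    and nonneg: "\<And>r. r \<in> {a<..T} \<Longrightarrow> 0 \<le> y r"
    and bounded: "\<And>r. r \<in> {a<..T} \<Longrightarrow> y r \<le> M"
    and integrable: "\<And>s. s \<in> {a<..T} \<Longrightarrow> (\<lambda>r. kernel \<rho> s r * y r) integrable_on {a..s}"
    and ineq: "\<And>s. s \<in> {a<..T} \<Longrightarrow>
                 y s \<le> B + (\<Sum>k\<in>{k\<in>{1..m}. t k < s}. y (t k) + e) / g
                        + G / Gamma \<rho> * integral {a..s} (\<lambda>r. kernel \<rho> s r * y r)"
    and s: "s \<in> {a<..T}"
  shows "y s \<le> impulse_seq B (mittag_leffler \<rho> (G * (\<phi> T - \<phi> a) powr \<rho>)) e g m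
               * mittag_leffler \<rho> (G * (\<phi> T - \<phi> a) powr \<rho>)"
proof -
  define E where "E = mittag_leffler \<rho> (G * (\<phi> T - \<phi> a) powr \<rho>)"
  define D where "D = impulse_seq B E e g"
  have E: "0 \<le> E"
    unfolding E_def using \<rho> G by (intro mittag_leffler_nonneg) auto
  have D: "0 \<le> D i" for i
    unfolding D_def using B E e g by (rule impulse_seq_nonneg)
  have "\<forall>s\<in>{a<..t (Suc i)}. y s \<le> D i * E" if "i \<le> m" for i
    using that
  proof (induction i rule: less_induct)
    case (less i)
    define b where "b = t (Suc i)"
    have b: "b \<in> {a<..T}" using t_mem[of "Suc i"] less.prems by (simp add: b_def)
    have earlier: "y (t k) \<le> D (k - 1) * E" if k: "k \<in> {1..i}" for k
    proof -
      have "\<forall>s\<in>{a<..t (Suc (k - 1))}. y s \<le> D (k - 1) * E"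
        using k less.prems by (intro less.IH) auto
      moreover have "Suc (k - 1) = k" "t k \<in> {a<..T}"
        using k less.prems t_mem[of k] by auto
      ultimately show ?thesis by auto
    qed
    have gronwall_hyp: "y s \<le> D i + G / Gamma \<rho> * integral {a..s} (\<lambda>r. kernel \<rho> s r * y r)"
      if s: "s \<in> {a<..b}" for s
    proof -
      have "B + (\<Sum>k\<in>{k\<in>{1..m}. t k < s}. y (t k) + e) / g \<le> D i"
        unfolding D_def using s less.prems e g nonneg t_mem earlier[unfolded D_def]
        by (intro jump_sum_le_impulse_seq) (auto simp: b_def)
      then show ?thesis
        using ineq[of s] s b by auto
    qed
    show ?case
    proof
      fix s assume "s \<in> {a<..t (Suc i)}"
      then have s: "s \<in> {a<..b}" by (simp add: b_def)
      have "y s \<le> D i * mittag_leffler \<rho> (G * (\<phi> b - \<phi> a) powr \<rho>)"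
        by (rule frac_gronwall[OF b \<rho> G D _ _ gronwall_hyp s, where M = M]) (use b bounded integrable in auto)
      also have "\<dots> \<le> D i * E"
        unfolding E_def using b \<rho> G D phi_diff_pos[OF b] phi_mono[of b T] a_less_T
        by (intro mult_left_mono mittag_leffler_mono mult_left_mono powr_mono2) auto
      finally show "y s \<le> D i * E" .
    qed
  qed
  then show ?thesis
    using s t_Suc_m by (auto simp: D_def E_def)
qed

context
  fixes \<sigma> \<rho> \<delta>a \<epsilon>f \<epsilon>J ua va :: real and f f' :: "real \<Rightarrow> real \<Rightarrow> real"
    and Jk Jk' :: "nat \<Rightarrow> real \<Rightarrow> real" and u v :: "real \<Rightarrow> real"
  assumes \<sigma>: "0 < \<sigma>" "\<sigma> \<le> 1" and \<rho>: "0 < \<rho>"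
    and solu: "is_solution \<phi> \<phi>' a T t m \<sigma> \<rho> f Jk ua u"
    and solv: "is_solution \<phi> \<phi>' a T t m \<sigma> \<rho> f' Jk' va v"
    and Lip_f: "\<And>r. r \<in> {a<..T} - t ` {1..m} \<Longrightarrow>
                  \<bar>f r (u r) - f r (v r)\<bar> \<le> (\<phi> r - \<phi> a) powr (1 - \<sigma>) * \<bar>u r - v r\<bar>"
    and Lip_J: "\<And>k. k \<in> {1..m} \<Longrightarrow>
                  \<bar>Jk k (u (t k)) - Jk k (v (t k))\<bar> \<le> (\<phi> (t k) - \<phi> a) powr (1 - \<sigma>) * \<bar>u (t k) - v (t k)\<bar>"
    and ua: "\<bar>ua - va\<bar> \<le> \<delta>a" and \<epsilon>f: "0 \<le> \<epsilon>f" and \<epsilon>J: "0 \<le> \<epsilon>J"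
    and f': "\<And>r w. r \<in> {a<..T} \<Longrightarrow> \<bar>f r w - f' r w\<bar> \<le> \<epsilon>f"
    and J': "\<And>k w. k \<in> {1..m} \<Longrightarrow> \<bar>Jk k w - Jk' k w\<bar> \<le> \<epsilon>J"
begin

lemma solution_weighted_difference_le:
  assumes s: "s \<in> {a<..T}"
  defines "B \<equiv> \<delta>a / Gamma \<sigma> + (\<phi> T - \<phi> a) powr (1 - \<sigma> + \<rho>) / Gamma (\<rho> + 1) * \<epsilon>f"
    and "E \<equiv> mittag_leffler \<rho> ((\<phi> T - \<phi> a) powr (1 - \<sigma> + \<rho>))"
  shows "(\<phi> s - \<phi> a) powr (1 - \<sigma>) * \<bar>u s - v s\<bar> \<le> impulse_seq B E \<epsilon>J (Gamma \<sigma>) m * E"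
proof -
  define y where "y r = (\<phi> r - \<phi> a) powr (1 - \<sigma>) * \<bar>u r - v r\<bar>" for r
  define G where "G = (\<phi> T - \<phi> a) powr (1 - \<sigma>)"
  have u: "u \<in> PC_space \<phi> \<phi>' a T t m \<sigma>" and v: "v \<in> PC_space \<phi> \<phi>' a T t m \<sigma>"
    using solu solv by (auto simp: is_solution_def)
  have \<Gamma>: "0 < Gamma \<sigma>" "0 < Gamma (\<rho> + 1)"
    using \<sigma> \<rho> by auto
  have GX: "G * (\<phi> T - \<phi> a) powr \<rho> = (\<phi> T - \<phi> a) powr (1 - \<sigma> + \<rho>)"
    by (simp add: G_def powr_add)
  have B: "0 \<le> B"
    using ua \<epsilon>f \<Gamma> by (auto simp: B_def)
  obtain M where bounded: "\<And>r. r \<in> {a<..T} \<Longrightarrow> y r \<le> M"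
    using PC_weighted_difference_bounded[OF u v] unfolding y_def by metis
  show ?thesis
    unfolding y_def[symmetric] E_def GX[symmetric]
  proof (rule impulsive_frac_gronwall[OF \<rho> _ B \<epsilon>J \<Gamma>(1) _ bounded _ _ s])
    fix s assume s: "s \<in> {a<..T}"
    show "(\<lambda>r. kernel \<rho> s r * y r) integrable_on {a..s}"
      unfolding y_def using PC_weighted_difference_integrable[OF u v s \<rho>] .
    have "y s \<le> (\<delta>a + (\<Sum>k\<in>{k\<in>{1..m}. t k < s}. y (t k) + \<epsilon>J)) / Gamma \<sigma>
               + (\<phi> T - \<phi> a) powr (1 - \<sigma> + \<rho>) / Gamma (\<rho> + 1) * \<epsilon>f
               + G / Gamma \<rho> * integral {a..s} (\<lambda>r. kernel \<rho> s r * y r)"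
      unfolding G_def
      by (rule weighted_difference_estimate[OF solu solv \<sigma> \<rho> \<epsilon>f y_def _ _ ua f' J' s])
         (use Lip_f Lip_J in \<open>auto simp: y_def\<close>)
    then show "y s \<le> B + (\<Sum>k\<in>{k\<in>{1..m}. t k < s}. y (t k) + \<epsilon>J) / Gamma \<sigma>
                 + G / Gamma \<rho> * integral {a..s} (\<lambda>r. kernel \<rho> s r * y r)"
      by (simp add: B_def add_divide_distrib)
  qed (auto simp: G_def y_def)
qed

lemma solution_stability:
  "PC_norm \<phi> a T \<sigma> (\<lambda>s. u s - v s)
   \<le> (\<delta>a / Gamma \<sigma> + real m * \<epsilon>J / Gamma \<sigma>
       + (\<phi> T - \<phi> a) powr (1 - \<sigma> + \<rho>) / Gamma (\<rho> + 1) * \<epsilon>f)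
     * ((1 + mittag_leffler \<rho> ((\<phi> T - \<phi> a) powr (1 - \<sigma> + \<rho>)) / Gamma \<sigma>) ^ m
        * mittag_leffler \<rho> ((\<phi> T - \<phi> a) powr (1 - \<sigma> + \<rho>)))"
proof -
  define B where "B = \<delta>a / Gamma \<sigma> + (\<phi> T - \<phi> a) powr (1 - \<sigma> + \<rho>) / Gamma (\<rho> + 1) * \<epsilon>f"
  define E where "E = mittag_leffler \<rho> ((\<phi> T - \<phi> a) powr (1 - \<sigma> + \<rho>))"
  have \<Gamma>: "0 < Gamma \<sigma>" "0 < Gamma (\<rho> + 1)"
    using \<sigma> \<rho> by auto
  have B: "0 \<le> B" and E: "0 \<le> E"
    using ua \<epsilon>f \<Gamma> \<rho> by (auto simp: B_def E_def intro!: mittag_leffler_nonneg)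
  have "PC_norm \<phi> a T \<sigma> (\<lambda>s. u s - v s) \<le> impulse_seq B E \<epsilon>J (Gamma \<sigma>) m * E"
    unfolding PC_norm_def
  proof (rule cSUP_least)
    fix s assume "s \<in> {a<..T}"
    then show "\<bar>(\<phi> s - \<phi> a) powr (1 - \<sigma>) * (u s - v s)\<bar> \<le> impulse_seq B E \<epsilon>J (Gamma \<sigma>) m * E"
      using solution_weighted_difference_le by (simp add: B_def E_def abs_mult)
  qed (use a_less_T in auto)
  also have "\<dots> \<le> (B + real m * (\<epsilon>J / Gamma \<sigma>)) * (1 + E / Gamma \<sigma>) ^ m * E"
    using B E \<epsilon>J \<Gamma> by (intro mult_right_mono impulse_seq_le) auto
  finally show ?thesis
    by (simp add: B_def E_def algebra_simps)
qed

end

end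

theorem mainTheorem3:
  fixes a T :: real and m :: nat and t :: "nat \<Rightarrow> real"
    and \<phi> \<phi>' :: "real \<Rightarrow> real" and \<rho> \<nu> \<sigma> :: real
    and f f' :: "real \<Rightarrow> real \<Rightarrow> real" and Jk Jk' :: "nat \<Rightarrow> real \<Rightarrow> real"
    and ua va \<delta>a \<epsilon>f \<epsilon>J :: real and u v :: "real \<Rightarrow> real"
  assumes "a < T" and "m \<ge> 1"
    and "t 0 = a" and "t (Suc m) = T" and "\<forall>k\<le>m. t k < t (Suc k)"
    and "\<forall>s\<in>{a..T}. (\<phi> has_real_derivative \<phi>' s) (at s within {a..T})"
    and "continuous_on {a..T} \<phi>'"
    and "mono_on {a..T} \<phi>"
    and "\<forall>s\<in>{a..T}. \<phi>' s \<noteq> 0"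
    and "0 < \<rho>" and "\<rho> < 1" and "0 \<le> \<nu>" and "\<nu> \<le> 1"
    and "\<sigma> = \<rho> + \<nu> - \<rho> * \<nu>"
    \<comment> \<open>(H1)(ii)\<close>
    and H1: "\<forall>w1\<in>PC_space \<phi> \<phi>' a T t m \<sigma>. \<forall>w2\<in>PC_space \<phi> \<phi>' a T t m \<sigma>.
             \<forall>s\<in>{a<..T} - t ` {1..m}.
               \<bar>f s (w1 s) - f s (w2 s)\<bar> \<le> (\<phi> s - \<phi> a) powr (1 - \<sigma>) * \<bar>w1 s - w2 s\<bar>"
    \<comment> \<open>(H2)(i)\<close>
    and H2: "\<forall>k\<in>{1..m}. \<forall>w1\<in>PC_space \<phi> \<phi>' a T t m \<sigma>. \<forall>w2\<in>PC_space \<phi> \<phi>' a T t m \<sigma>.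
               \<bar>Jk k (Lim (at_left (t k)) w1) - Jk k (Lim (at_left (t k)) w2)\<bar>
                 \<le> (\<phi> (t k) - \<phi> a) powr (1 - \<sigma>)
                     * \<bar>Lim (at_left (t k)) w1 - Lim (at_left (t k)) w2\<bar>"
    and "\<delta>a > 0" and "\<epsilon>f > 0" and "\<epsilon>J > 0"
    and "\<bar>ua - va\<bar> \<le> \<delta>a"
    and "\<forall>s\<in>{a<..T}. \<forall>w. \<bar>f s w - f' s w\<bar> \<le> \<epsilon>f"
    and "\<forall>k\<in>{1..m}. \<forall>w. \<bar>Jk k w - Jk' k w\<bar> \<le> \<epsilon>J"
    and "is_solution \<phi> \<phi>' a T t m \<sigma> \<rho> f Jk ua u"
    and "is_solution \<phi> \<phi>' a T t m \<sigma> \<rho> f' Jk' va v"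
  shows "PC_norm \<phi> a T \<sigma> (\<lambda>s. u s - v s)
         \<le> (\<delta>a / Gamma \<sigma> + real m * \<epsilon>J / Gamma \<sigma>
             + (\<phi> T - \<phi> a) powr (1 - \<sigma> + \<rho>) / Gamma (\<rho> + 1) * \<epsilon>f)
           * ((1 + mittag_leffler \<rho> ((\<phi> T - \<phi> a) powr (1 - \<sigma> + \<rho>)) / Gamma \<sigma>) ^ m
              * mittag_leffler \<rho> ((\<phi> T - \<phi> a) powr (1 - \<sigma> + \<rho>)))"
proof -
  have \<sigma>: "0 < \<sigma>" "\<sigma> \<le> 1"
    using hilfer_type_bounds[of \<rho> \<nu>] assms(10-14) by auto
  have "0 < \<phi>' x" if "x \<in> {a..T}" for x
    using mono_on_deriv_pos[of a T \<phi> \<phi>'] assms(1,6-9) that by blast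
  then interpret impulsive_frac_problem \<phi> \<phi>' a T m t
    using assms(1-7) by unfold_locales auto
  have u: "u \<in> PC_space \<phi> \<phi>' a T t m \<sigma>" and v: "v \<in> PC_space \<phi> \<phi>' a T t m \<sigma>"
    using assms(23,24) by (auto simp: is_solution_def)
  show ?thesis
  proof (rule solution_stability[OF \<sigma> \<open>0 < \<rho>\<close> assms(23,24)])
    show "\<bar>f r (u r) - f r (v r)\<bar> \<le> (\<phi> r - \<phi> a) powr (1 - \<sigma>) * \<bar>u r - v r\<bar>"
      if "r \<in> {a<..T} - t ` {1..m}" for r
      using H1 u v that by blast
    show "\<bar>Jk k (u (t k)) - Jk k (v (t k))\<bar> \<le> (\<phi> (t k) - \<phi> a) powr (1 - \<sigma>) * \<bar>u (t k) - v (t k)\<bar>"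
      if "k \<in> {1..m}" for k
      using H2 u v that by (simp add: PC_left_limit)
  qed (use assms(17-22) in auto)
qed

end
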